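(* Let $\mathcal{X},\mathcal{Y}\subset\mathbb{R}^d$ be finite sets in coupled general position and let $Q=Q_{\mathcal{X}}\sqcup Q_{\mathcal{Y}}$ be a simplex of $\mathcal{A}^{\mathrm{co}}_\infty(\mathcal{X},\mathcal{Y})$ with $|Q|=m+1$, $Q_{\mathcal{X}}=\{x_1,\dots,x_l\}\subset\mathcal{X}$ and $Q_{\mathcal{Y}}=\{y_1,\dots,y_{m-l+1}\}\subset\mathcal{Y}$ both nonempty. Consider the relaxed problem $$r_{\mathrm{rel}}^2(Q)=\min_{c\in\mathbb{R}^d}\max\{\|c-x_1\|^2,\|c-y_1\|^2\}\quad\text{subject to } Ac=b,$$ where $A$ is the matrix with rows $(x_2-x_1)^T,\dots,(x_l-x_1)^T,(y_2-y_1)^T,\dots,(y_{m-l+1}-y_1)^T$ and $b=\tfrac12\big(\|x_2\|^2-\|x_1\|^2,\dots,\|x_l\|^2-\|x_1\|^2,\|y_2\|^2-\|y_1\|^2,\dots,\|y_{m-l+1}\|^2-\|y_1\|^2\big)^T$ (so $Ac=b$ says $c$ is equidistant from all points of $Q_{\mathcal{X}}$ and equidistant from all points of $Q_{\mathcal{Y}}$). Let $c_0$ satisfy $Ac_0=b$, let $F\in\mathbb{R}^{d\times(d-m+1)}$ have orthonormal columns forming a basis of $\ker A$, and set $s_x=F^T(x_1-c_0)$, $s_y=F^T(y_1-c_0)$, and $r_x(x_1)=\|Fs_x+c_0-x_1\|$, $r_x(y_1)=\|Fs_x+c_0-y_1\|$, $r_y(x_1)=\|Fs_y+c_0-x_1\|$,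 $r_y(y_1)=\|Fs_y+c_0-y_1\|$. Then $$r_{\mathrm{rel}}(Q)=\begin{cases} r_x(x_1) & \text{if } r_x(x_1)\ge r_x(y_1),\\ r_y(y_1) & \text{if } r_y(x_1)\le r_y(y_1),\\ R(Q) & \text{otherwise},\end{cases}$$ where $R(Q)$ is the radius of the minimal circumsphere of $Q$ in $\mathbb{R}^d$ (the smallest sphere in $\mathbb{R}^d$ passing through all points of $Q$).
   Context: For finite $\mathcal{Z}\subset\mathbb{R}^d$, $\mathrm{Vor}(z,\mathcal{Z})=\{w:\|z-w\|\le\|z'-w\|\ \forall z'\in\mathcal{Z}\}$. $\mathcal{A}^{\mathrm{co}}_\infty(\mathcal{X},\mathcal{Y})$ is the abstract simplicial complex on the disjoint union of $\mathcal{X}$ and $\mathcal{Y}$ consisting of all $Q=Q_{\mathcal{X}}\sqcup Q_{\mathcal{Y}}$ with $\bigcap_{x\in Q_{\mathcal{X}}}\mathrm{Vor}(x,\mathcal{X})\cap\bigcap_{y\in Q_{\mathcal{Y}}}\mathrm{Vor}(y,\mathcal{Y})\ne\emptyset$. A finite $P\subset\mathbb{R}^d$ is in general position if for every $Q\subset P$ with $|Q|=d+1$ the points of $Q$ do not lie on a $(d-1)$-dimensional affine flat and no point of $P\setminus Q$ lies on the circumsphere of $Q$. $P_1,P_2$ are in coupled general position if each is in general position and, with $\hat P_1=P_1\times\{0\}$, $\hat P_2=P_2\times\{1\}\subset\mathbb{R}^{d+1}$, for all $\hat Q_1\subset\hat P_1,\hat Q_2\subset\hat P_2$ with $|\hat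 Q_1\cup\hat Q_2|=d+2$, no point of $(\hat P_1\setminus\hat Q_1)\cup(\hat P_2\setminus\hat Q_2)$ lies on the circumsphere of $\hat Q_1\cup\hat Q_2$. Under these assumptions the rows of $A$ are linearly independent. *)

theory Defs
  imports "HOL-Analysis.Analysis"
begin

definition Vor :: "'a::metric_space \<Rightarrow> 'a set \<Rightarrow> 'a set" where
  "Vor z Z = {w. \<forall>z'\<in>Z. dist z w \<le> dist z' w}"

definition co_simplex :: "'a::metric_space set \<Rightarrow> 'a set \<Rightarrow> 'a set \<Rightarrow> 'a set \<Rightarrow> bool" where
  "co_simplex X Y QX QY \<longleftrightarrow> QX \<subseteq> X \<and> QY \<subseteq> Y \<and>
     (\<Inter>x\<in>QX. Vor x X) \<inter> (\<Inter>y\<in>QY. Vor y Y) \<noteq> {}"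

text \<open>The circumsphere of Q: the sphere through all points of Q whose centre lies in the
  affine hull of Q (unique whenever it exists).\<close>
definition circumsphere :: "'a::euclidean_space set \<Rightarrow> 'a \<Rightarrow> real \<Rightarrow> bool" where
  "circumsphere Q c r \<longleftrightarrow> c \<in> affine hull Q \<and> (\<forall>q\<in>Q. dist c q = r)"

definition general_position :: "'a::euclidean_space set \<Rightarrow> bool" where
  "general_position P \<longleftrightarrow>
     (\<forall>Q. Q \<subseteq> P \<and> card Q = DIM('a) + 1 \<longrightarrow>
        \<not> affine_dependent Q \<and>
        (\<forall>c r. circumsphere Q c r \<longrightarrow> (\<forall>p\<in>P - Q. dist c p \<noteq> r)))"

definition lift :: "real \<Rightarrow> 'a set \<Rightarrow> ('a \<times> real) set" where
  "lift t P = (\<lambda>x. (x, t)) ` P"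

definition coupled_general_position :: "'a::euclidean_space set \<Rightarrow> 'a set \<Rightarrow> bool" where
  "coupled_general_position P1 P2 \<longleftrightarrow>
     general_position P1 \<and> general_position P2 \<and>
     (\<forall>Q1 Q2. Q1 \<subseteq> lift 0 P1 \<and> Q2 \<subseteq> lift 1 P2 \<and> card (Q1 \<union> Q2) = DIM('a) + 2 \<longrightarrow>
        (\<forall>c r. circumsphere (Q1 \<union> Q2) c r \<longrightarrow>
           (\<forall>p\<in>(lift 0 P1 - Q1) \<union> (lift 1 P2 - Q2). dist c p \<noteq> r)))"

text \<open>The affine constraint A c = b, written row by row (the row for x1 / y1 itself is trivial).\<close>
definition equi_set :: "'a::euclidean_space set \<Rightarrow> 'a set \<Rightarrow> 'a \<Rightarrow> 'a \<Rightarrow> 'a set" where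
  "equi_set QX QY x1 y1 = {c.
     (\<forall>x\<in>QX. inner (x - x1) c = (norm x ^ 2 - norm x1 ^ 2) / 2) \<and>
     (\<forall>y\<in>QY. inner (y - y1) c = (norm y ^ 2 - norm y1 ^ 2) / 2)}"

definition kerA :: "'a::euclidean_space set \<Rightarrow> 'a set \<Rightarrow> 'a \<Rightarrow> 'a \<Rightarrow> 'a set" where
  "kerA QX QY x1 y1 = {v.
     (\<forall>x\<in>QX. inner (x - x1) v = 0) \<and> (\<forall>y\<in>QY. inner (y - y1) v = 0)}"

definition r_rel :: "'a::euclidean_space set \<Rightarrow> 'a set \<Rightarrow> 'a \<Rightarrow> 'a \<Rightarrow> real" where
  "r_rel QX QY x1 y1 =
     sqrt (Inf ((\<lambda>c. max ((norm (c - x1))\<^sup>2) ((norm (c - y1))\<^sup>2)) ` equi_set QX QY x1 y1))"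

definition min_circumradius :: "'a::euclidean_space set \<Rightarrow> real" where
  "min_circumradius Q = Inf {r. \<exists>c. \<forall>q\<in>Q. dist c q = r}"

end

theory Submission
  imports Defs
begin

text \<open>The admissible centres form the affine subspace E = c0 + ker A, and the points
  px = F sx + c0, py = F sy + c0 are the orthogonal projections of x1, y1 onto E. By Pythagoras,
  for c in E the objective is max(|c - px|^2 + rxx^2, |c - py|^2 + ryy^2). If rxx >= rxy the first
  term dominates at px, which is therefore optimal; symmetrically for py. Otherwise both terms
  agree at a unique point of the segment [px, py], and a convex combination of the two terms
  shows that this point is optimal. Being equidistant from x1 and y1, it is then the centre of the
  smallest sphere through Q.\<close>

lemma perpendicular_bisector_iff_dist_eq:
  fixes c x x1 :: "'a::real_inner"
  shows "inner (x - x1) c = ((norm x)\<^sup>2 - (norm x1)\<^sup>2) / 2 \<longleftrightarrow> dist c x = dist c x1"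
proof -
  have "dist c x = dist c x1 \<longleftrightarrow> (norm (c - x))\<^sup>2 = (norm (c - x1))\<^sup>2"
    by (simp add: dist_norm)
  also have "\<dots> \<longleftrightarrow> inner (x - x1) c = ((norm x)\<^sup>2 - (norm x1)\<^sup>2) / 2"
    by (simp add: power2_norm_eq_inner inner_commute) (auto simp: algebra_simps inner_commute)
  finally show ?thesis by simp
qed

lemma orthonormal_projection_residual_orthogonal:
  fixes Fb :: "'a::euclidean_space set"
  assumes "pairwise orthogonal Fb" "\<forall>f\<in>Fb. norm f = 1" "k \<in> span Fb"
  shows "orthogonal k (v - (\<Sum>f\<in>Fb. inner f v *\<^sub>R f))"
proof -
  have "(\<Sum>f\<in>Fb. (f \<bullet> v / (f \<bullet> f)) *\<^sub>R f) = (\<Sum>f\<in>Fb. inner f v *\<^sub>R f)"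
    using assms(2) by (intro sum.cong) (auto simp: norm_eq_1)
  then show ?thesis
    using Gram_Schmidt_step[OF assms(1,3), of v] by simp
qed

lemma orthonormal_affine_projection:
  fixes Fb :: "'a::euclidean_space set" and c0 z :: 'a
  assumes "pairwise orthogonal Fb" and "\<forall>f\<in>Fb. norm f = 1" and E: "E = {c. c - c0 \<in> span Fb}"
  defines "p \<equiv> (\<Sum>f\<in>Fb. inner f (z - c0) *\<^sub>R f) + c0"
  shows "convex E" and "p \<in> E"
    and "\<And>c. c \<in> E \<Longrightarrow> (norm (c - z))\<^sup>2 = (norm (c - p))\<^sup>2 + (norm (p - z))\<^sup>2"
proof -
  have "E = (+) c0 ` span Fb"
    unfolding E by (force simp: image_iff)
  then show "convex E"
    by (simp add: subspace_imp_convex)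
  have proj_in_span: "(\<Sum>f\<in>Fb. inner f (z - c0) *\<^sub>R f) \<in> span Fb"
    by (intro span_sum span_scale span_base)
  then show "p \<in> E"
    unfolding E p_def by simp
  fix c assume "c \<in> E"
  have "c - p = (c - c0) - (\<Sum>f\<in>Fb. inner f (z - c0) *\<^sub>R f)"
    unfolding p_def by simp
  also have "\<dots> \<in> span Fb"
    using \<open>c \<in> E\<close> proj_in_span unfolding E by (simp add: span_diff)
  finally have "orthogonal (c - p) ((z - c0) - (\<Sum>f\<in>Fb. inner f (z - c0) *\<^sub>R f))"
    by (rule orthonormal_projection_residual_orthogonal[OF assms(1,2)])
  then have "orthogonal (c - p) (p - z)"
    unfolding p_def by (simp add: orthogonal_def algebra_simps)
  then show "(norm (c - z))\<^sup>2 = (norm (c - p))\<^sup>2 + (norm (p - z))\<^sup>2"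
    using norm_add_Pythagorean[of "c - p" "p - z"] by simp
qed

lemma Inf_max_sq_dist_at_nearest_point:
  fixes E :: "'a::real_normed_vector set"
  assumes "p \<in> E" and "\<And>c. c \<in> E \<Longrightarrow> (norm (c - x))\<^sup>2 = (norm (c - p))\<^sup>2 + (norm (p - x))\<^sup>2"
    and "norm (p - y) \<le> norm (p - x)"
  shows "Inf ((\<lambda>c. max ((norm (c - x))\<^sup>2) ((norm (c - y))\<^sup>2)) ` E) = (norm (p - x))\<^sup>2"
proof (rule cInf_eq_minimum)
  have "(norm (p - y))\<^sup>2 \<le> (norm (p - x))\<^sup>2"
    using assms(3) by (simp add: power_mono)
  then show "(norm (p - x))\<^sup>2 \<in> (\<lambda>c. max ((norm (c - x))\<^sup>2) ((norm (c - y))\<^sup>2)) ` E"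
    using assms(1) by (intro image_eqI[of _ _ p]) (auto simp: max_def)
next
  fix r assume "r \<in> (\<lambda>c. max ((norm (c - x))\<^sup>2) ((norm (c - y))\<^sup>2)) ` E"
  then obtain c where "c \<in> E" "r = max ((norm (c - x))\<^sup>2) ((norm (c - y))\<^sup>2)" by blast
  then show "(norm (p - x))\<^sup>2 \<le> r"
    using assms(2)[of c] by (simp add: le_max_iff_disj)
qed

lemma convex_comb_sq_dist:
  fixes c p q :: "'a::real_inner"
  shows "(1 - t) * (norm (c - p))\<^sup>2 + t * (norm (c - q))\<^sup>2
     = (norm (c - ((1 - t) *\<^sub>R p + t *\<^sub>R q)))\<^sup>2 + t * (1 - t) * (norm (q - p))\<^sup>2"
  by (simp add: power2_norm_eq_inner inner_commute algebra_simps)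

lemma balanced_point_on_segment:
  fixes p q :: "'a::real_inner" and a b :: real
  assumes "a < (norm (p - q))\<^sup>2 + b" and "b < (norm (p - q))\<^sup>2 + a"
  obtains s where "s \<in> closed_segment p q" and "(norm (s - p))\<^sup>2 + a = (norm (s - q))\<^sup>2 + b"
    and "\<And>c. (norm (s - p))\<^sup>2 + a \<le> max ((norm (c - p))\<^sup>2 + a) ((norm (c - q))\<^sup>2 + b)"
proof -
  define d where "d = (norm (p - q))\<^sup>2"
  define t where "t = (d + b - a) / (2 * d)" \<comment> \<open>the root of t^2 d + a = (1 - t)^2 d + b\<close>
  define s where "s = (1 - t) *\<^sub>R p + t *\<^sub>R q"
  have "p \<noteq> q" using assms by auto
  then have "d > 0" unfolding d_def by simp
  then have t01: "0 \<le> t" "t \<le> 1" and t_eq: "2 * t * d = d + b - a"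
    using assms unfolding t_def d_def by (simp_all add: field_simps)
  have "s - p = t *\<^sub>R (q - p)" and "s - q = (1 - t) *\<^sub>R (p - q)"
    unfolding s_def by (simp_all add: algebra_simps)
  then have sp: "(norm (s - p))\<^sup>2 = t\<^sup>2 * d" and sq: "(norm (s - q))\<^sup>2 = (1 - t)\<^sup>2 * d"
    unfolding d_def by (simp_all add: power_mult_distrib norm_minus_commute)
  have balanced: "(norm (s - p))\<^sup>2 + a = (norm (s - q))\<^sup>2 + b"
    using t_eq unfolding sp sq by (simp add: power2_eq_square algebra_simps)
  have "(norm (s - p))\<^sup>2 + a \<le> max ((norm (c - p))\<^sup>2 + a) ((norm (c - q))\<^sup>2 + b)" for c
  proof -
    have "(norm (s - p))\<^sup>2 + a = (1 - t) * ((norm (s - p))\<^sup>2 + a) + t * ((norm (s - q))\<^sup>2 + b)"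
      using balanced by (simp add: algebra_simps)
    also have "\<dots> = t * (1 - t) * d + (1 - t) * a + t * b"
      unfolding sp sq by (simp add: power2_eq_square algebra_simps)
    also have "\<dots> \<le> (norm (c - s))\<^sup>2 + t * (1 - t) * d + (1 - t) * a + t * b"
      by simp
    also have "\<dots> = (1 - t) * (norm (c - p))\<^sup>2 + t * (norm (c - q))\<^sup>2 + (1 - t) * a + t * b"
      using convex_comb_sq_dist[of t c p q] unfolding s_def d_def by (simp add: norm_minus_commute)
    also have "\<dots> = (1 - t) * ((norm (c - p))\<^sup>2 + a) + t * ((norm (c - q))\<^sup>2 + b)"
      by (simp add: algebra_simps)
    also have "\<dots> \<le> (1 - t) * max ((norm (c - p))\<^sup>2 + a) ((norm (c - q))\<^sup>2 + b)
                  + t * max ((norm (c - p))\<^sup>2 + a) ((norm (c - q))\<^sup>2 + b)"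
      using t01 by (intro add_mono mult_left_mono) auto
    also have "\<dots> = max ((norm (c - p))\<^sup>2 + a) ((norm (c - q))\<^sup>2 + b)"
      by (simp add: algebra_simps)
    finally show ?thesis .
  qed
  moreover have "s \<in> closed_segment p q"
    unfolding s_def in_segment using t01 by blast
  ultimately show ?thesis using that balanced by blast
qed

lemma equidistant_minimizer_on_convex:
  fixes E :: "'a::real_inner set"
  assumes "convex E" and "px \<in> E" and "py \<in> E"
    and pyth_x: "\<And>c. c \<in> E \<Longrightarrow> (norm (c - x))\<^sup>2 = (norm (c - px))\<^sup>2 + (norm (px - x))\<^sup>2"
    and pyth_y: "\<And>c. c \<in> E \<Longrightarrow> (norm (c - y))\<^sup>2 = (norm (c - py))\<^sup>2 + (norm (py - y))\<^sup>2"
    and "norm (px - x) < norm (px - y)" and "norm (py - y) < norm (py - x)"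
  obtains s where "s \<in> E" and "norm (s - x) = norm (s - y)"
    and "\<And>c. c \<in> E \<Longrightarrow> (norm (s - x))\<^sup>2 \<le> max ((norm (c - x))\<^sup>2) ((norm (c - y))\<^sup>2)"
proof -
  define a where "a = (norm (px - x))\<^sup>2"
  define b where "b = (norm (py - y))\<^sup>2"
  have "a < (norm (px - y))\<^sup>2"
    using assms(6) unfolding a_def by (simp add: power_strict_mono)
  also have "\<dots> = (norm (px - py))\<^sup>2 + b"
    using pyth_y[OF \<open>px \<in> E\<close>] unfolding b_def .
  finally have a_lt: "a < (norm (px - py))\<^sup>2 + b" .
  have "b < (norm (py - x))\<^sup>2"
    using assms(7) unfolding b_def by (simp add: power_strict_mono)
  also have "\<dots> = (norm (px - py))\<^sup>2 + a"
    using pyth_x[OF \<open>py \<in> E\<close>] unfolding a_def by (simp add: norm_minus_commute)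
  finally have b_lt: "b < (norm (px - py))\<^sup>2 + a" .
  obtain s where s_seg: "s \<in> closed_segment px py"
    and balanced: "(norm (s - px))\<^sup>2 + a = (norm (s - py))\<^sup>2 + b"
    and minimal: "\<And>c. (norm (s - px))\<^sup>2 + a \<le> max ((norm (c - px))\<^sup>2 + a) ((norm (c - py))\<^sup>2 + b)"
    using balanced_point_on_segment[OF a_lt b_lt] by blast
  have "s \<in> E"
    using s_seg assms(1-3) by (meson convex_contains_segment subsetD)
  then have sx: "(norm (s - x))\<^sup>2 = (norm (s - px))\<^sup>2 + a" and sy: "(norm (s - y))\<^sup>2 = (norm (s - py))\<^sup>2 + b"
    using pyth_x pyth_y unfolding a_def b_def by blast+
  show ?thesis
  proof
    show "norm (s - x) = norm (s - y)"
      using sx sy balanced by (metis norm_ge_zero power2_eq_iff_nonneg)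
    show "(norm (s - x))\<^sup>2 \<le> max ((norm (c - x))\<^sup>2) ((norm (c - y))\<^sup>2)" if "c \<in> E" for c
      using minimal[of c] pyth_x[OF that] pyth_y[OF that] unfolding sx a_def b_def by simp
  qed fact
qed

lemma sqrt_Inf_max_sq_dist_eq_Inf_equidistant:
  fixes E :: "'a::real_normed_vector set"
  assumes "s \<in> E" and "norm (s - x) = norm (s - y)"
    and minimal: "\<And>c. c \<in> E \<Longrightarrow> (norm (s - x))\<^sup>2 \<le> max ((norm (c - x))\<^sup>2) ((norm (c - y))\<^sup>2)"
  shows "sqrt (Inf ((\<lambda>c. max ((norm (c - x))\<^sup>2) ((norm (c - y))\<^sup>2)) ` E)) =
    Inf {r. \<exists>c\<in>E. dist c x = r \<and> dist c y = r}"
proof -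
  have "(norm (s - x))\<^sup>2 \<in> (\<lambda>c. max ((norm (c - x))\<^sup>2) ((norm (c - y))\<^sup>2)) ` E"
    by (rule image_eqI[of _ _ s]) (simp_all add: assms(1,2))
  then have "Inf ((\<lambda>c. max ((norm (c - x))\<^sup>2) ((norm (c - y))\<^sup>2)) ` E) = (norm (s - x))\<^sup>2"
    using minimal by (intro cInf_eq_minimum) auto
  moreover have "Inf {r. \<exists>c\<in>E. dist c x = r \<and> dist c y = r} = norm (s - x)"
  proof (rule cInf_eq_minimum)
    show "norm (s - x) \<in> {r. \<exists>c\<in>E. dist c x = r \<and> dist c y = r}"
      using assms(1,2) by (auto simp: dist_norm)
    fix r assume "r \<in> {r. \<exists>c\<in>E. dist c x = r \<and> dist c y = r}"
    then obtain c where "c \<in> E" "norm (c - x) = r" "norm (c - y) = r"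
      by (auto simp: dist_norm)
    then have "(norm (s - x))\<^sup>2 \<le> r\<^sup>2"
      using minimal by fastforce
    then show "norm (s - x) \<le> r"
      using \<open>norm (c - x) = r\<close> by (metis norm_ge_zero power2_le_imp_le)
  qed
  ultimately show ?thesis by simp
qed

lemma sqrt_Inf_max_sq_dist_on_convex:
  fixes E :: "'a::real_inner set"
  assumes "convex E" and "px \<in> E" and "py \<in> E"
    and pyth_x: "\<And>c. c \<in> E \<Longrightarrow> (norm (c - x))\<^sup>2 = (norm (c - px))\<^sup>2 + (norm (px - x))\<^sup>2"
    and pyth_y: "\<And>c. c \<in> E \<Longrightarrow> (norm (c - y))\<^sup>2 = (norm (c - py))\<^sup>2 + (norm (py - y))\<^sup>2"
  defines "m \<equiv> sqrt (Inf ((\<lambda>c. max ((norm (c - x))\<^sup>2) ((norm (c - y))\<^sup>2)) ` E))"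
  shows "norm (px - y) \<le> norm (px - x) \<Longrightarrow> m = norm (px - x)"
    and "norm (py - x) \<le> norm (py - y) \<Longrightarrow> m = norm (py - y)"
    and "norm (px - x) < norm (px - y) \<Longrightarrow> norm (py - y) < norm (py - x) \<Longrightarrow>
      m = Inf {r. \<exists>c\<in>E. dist c x = r \<and> dist c y = r}"
proof -
  show "m = norm (px - x)" if "norm (px - y) \<le> norm (px - x)"
    using Inf_max_sq_dist_at_nearest_point[OF \<open>px \<in> E\<close> pyth_x that] unfolding m_def by simp
  show "m = norm (py - y)" if "norm (py - x) \<le> norm (py - y)"
    using Inf_max_sq_dist_at_nearest_point[OF \<open>py \<in> E\<close> pyth_y that]
    unfolding m_def max.commute[of "(norm (_ - x))\<^sup>2"] by simp
  show "m = Inf {r. \<exists>c\<in>E. dist c x = r \<and> dist c y = r}"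
    if separated: "norm (px - x) < norm (px - y)" "norm (py - y) < norm (py - x)"
  proof -
    obtain s where "s \<in> E" "norm (s - x) = norm (s - y)"
      "\<And>c. c \<in> E \<Longrightarrow> (norm (s - x))\<^sup>2 \<le> max ((norm (c - x))\<^sup>2) ((norm (c - y))\<^sup>2)"
      using equidistant_minimizer_on_convex[OF assms(1-3) pyth_x pyth_y separated] by blast
    from sqrt_Inf_max_sq_dist_eq_Inf_equidistant[OF this] show ?thesis
      unfolding m_def .
  qed
qed

lemma equi_set_iff_equidistant:
  "c \<in> equi_set QX QY x1 y1 \<longleftrightarrow>
     (\<forall>x\<in>QX. dist c x = dist c x1) \<and> (\<forall>y\<in>QY. dist c y = dist c y1)"
  unfolding equi_set_def mem_Collect_eq perpendicular_bisector_iff_dist_eq by (rule refl)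

lemma equi_set_iff_kerA:
  assumes "c0 \<in> equi_set QX QY x1 y1"
  shows "c \<in> equi_set QX QY x1 y1 \<longleftrightarrow> c - c0 \<in> kerA QX QY x1 y1"
proof -
  have shift: "inner v c = r \<longleftrightarrow> inner v (c - c0) = 0" if "inner v c0 = r" for v r
    using that by (auto simp: inner_diff_right)
  show ?thesis
    using assms unfolding equi_set_def kerA_def mem_Collect_eq by (metis shift)
qed

lemma min_circumradius_eq_Inf_equidistant:
  assumes "x1 \<in> QX" and "y1 \<in> QY"
  shows "min_circumradius (QX \<union> QY) =
    Inf {r. \<exists>c\<in>equi_set QX QY x1 y1. dist c x1 = r \<and> dist c y1 = r}"
proof -
  have "(\<forall>q\<in>QX \<union> QY. dist c q = r) \<longleftrightarrow>
      c \<in> equi_set QX QY x1 y1 \<and> dist c x1 = r \<and> dist c y1 = r" for c r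
    using assms unfolding equi_set_iff_equidistant by auto
  then show ?thesis
    unfolding min_circumradius_def by (auto intro!: arg_cong[where f = Inf])
qed

theorem mainTheorem3:
  fixes X Y QX QY Fb :: "'a::euclidean_space set" and x1 y1 c0 :: 'a
  assumes "finite X" and "finite Y"
    and "coupled_general_position X Y"
    and "co_simplex X Y QX QY"
    and "x1 \<in> QX" and "y1 \<in> QY"
    and "c0 \<in> equi_set QX QY x1 y1"
    and "pairwise orthogonal Fb" and "\<forall>f\<in>Fb. norm f = 1"
    and "span Fb = kerA QX QY x1 y1"
    and "card Fb + (card QX + card QY) = DIM('a) + 2"
  defines "Fproj \<equiv> (\<lambda>v. \<Sum>f\<in>Fb. inner f v *\<^sub>R f)"
  defines "rxx \<equiv> norm (Fproj (x1 - c0) + c0 - x1)"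
      and "rxy \<equiv> norm (Fproj (x1 - c0) + c0 - y1)"
      and "ryx \<equiv> norm (Fproj (y1 - c0) + c0 - x1)"
      and "ryy \<equiv> norm (Fproj (y1 - c0) + c0 - y1)"
  shows "(rxx \<ge> rxy \<longrightarrow> r_rel QX QY x1 y1 = rxx)
       \<and> (ryx \<le> ryy \<longrightarrow> r_rel QX QY x1 y1 = ryy)
       \<and> (\<not> rxx \<ge> rxy \<and> \<not> ryx \<le> ryy \<longrightarrow> r_rel QX QY x1 y1 = min_circumradius (QX \<union> QY))"
proof -
  define E where "E = equi_set QX QY x1 y1"
  define px where "px = Fproj (x1 - c0) + c0"
  define py where "py = Fproj (y1 - c0) + c0"
  have E_eq: "E = {c. c - c0 \<in> span Fb}"
    unfolding E_def assms(10) using equi_set_iff_kerA[OF assms(7)] by blast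
  have "convex E" "px \<in> E" "py \<in> E"
    and pyth_x: "\<And>c. c \<in> E \<Longrightarrow> (norm (c - x1))\<^sup>2 = (norm (c - px))\<^sup>2 + (norm (px - x1))\<^sup>2"
    and pyth_y: "\<And>c. c \<in> E \<Longrightarrow> (norm (c - y1))\<^sup>2 = (norm (c - py))\<^sup>2 + (norm (py - y1))\<^sup>2"
    using orthonormal_affine_projection[OF assms(8,9) E_eq] unfolding px_def py_def Fproj_def by blast+
  have radii_eq_dists: "rxx = norm (px - x1)" "rxy = norm (px - y1)" "ryx = norm (py - x1)" "ryy = norm (py - y1)"
    unfolding rxx_def rxy_def ryx_def ryy_def px_def py_def by simp_all
  have r_rel_E: "r_rel QX QY x1 y1 = sqrt (Inf ((\<lambda>c. max ((norm (c - x1))\<^sup>2) ((norm (c - y1))\<^sup>2)) ` E))"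
    unfolding r_rel_def E_def ..
  show ?thesis
    using sqrt_Inf_max_sq_dist_on_convex[OF \<open>convex E\<close> \<open>px \<in> E\<close> \<open>py \<in> E\<close> pyth_x pyth_y,
        folded r_rel_E] min_circumradius_eq_Inf_equidistant[OF assms(5,6), folded E_def]
    unfolding radii_eq_dists not_le by auto
qed

end
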